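(* Let $n\ge 1$, let $C_u(v_1),\ldots,C_u(v_n)>0$ and $R_1,\ldots,R_n>0$ be sustainable, i.e. $R_i\le C_u(v_i)$ for all $i$, $\sum_{j\ne i}R_j\le C_d(v_i)$ for all $i$ (for some downlink capacities $C_d(v_i)>0$), and $(n-1)\sum_{i=1}^n R_i\le\sum_{i=1}^n C_u(v_i)$. Then the output $r_{i,j}$ of the algorithm described in the context satisfies the Valid Partition Constraint: $\sum_{j=1}^n r_{i,j} = R_i$ for every $1\le i\le n$.
   Context: Sub-stream rate assigning algorithm. Input: $n$, uplink capacities $C_u(v_1),\ldots,C_u(v_n)$ and rates $R_1,\ldots,R_n$. Initialize $r_{i,j}:=0$ for all $1\le i,j\le n$ and $U_i := C_u(v_i)-R_i$ for $1\le i\le n$. Outer loop: for $i=1$ to $n$: set $R'_i := R_i$; inner loop: for $j=1$ to $n$: if $(n-2)R'_i > U_j$ then set $r_{i,j} := U_j/(n-2)$, else set $r_{i,j} := R'_i$; then set $U_j := U_j-(n-2)r_{i,j}$ and $R'_i := R'_i - r_{i,j}$; if $R'_i = 0$, exit the inner loop. Output all $r_{i,j}$. *)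

theory Defs
  imports Complex_Main
begin

text \<open>Peers are indexed 1..n.
  The state of the inner loop is (U, R', r): the residual uplink capacities U,
  the still unassigned rate R'_i of the current sub-stream i, and the matrix r.\<close>

type_synonym inner_state = "(nat \<Rightarrow> real) \<times> real \<times> (nat \<Rightarrow> nat \<Rightarrow> real)"

definition inner_step :: "nat \<Rightarrow> nat \<Rightarrow> inner_state \<Rightarrow> nat \<Rightarrow> inner_state" where
  "inner_step n i s j =
     (case s of (U, Rp, r) \<Rightarrow>
        (let x = (if (real n - 2) * Rp > U j then U j / (real n - 2) else Rp)
         in (U(j := U j - (real n - 2) * x), Rp - x, r(i := (r i)(j := x)))))"

fun inner_loop :: "nat \<Rightarrow> nat \<Rightarrow> nat list \<Rightarrow> inner_state \<Rightarrow> inner_state" where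
  "inner_loop n i [] s = s"
| "inner_loop n i (j # js) s =
     (let s' = inner_step n i s j in
      if fst (snd s') = 0 then s' else inner_loop n i js s')"

definition outer_step :: "nat \<Rightarrow> (nat \<Rightarrow> real)
    \<Rightarrow> (nat \<Rightarrow> real) \<times> (nat \<Rightarrow> nat \<Rightarrow> real) \<Rightarrow> nat
    \<Rightarrow> (nat \<Rightarrow> real) \<times> (nat \<Rightarrow> nat \<Rightarrow> real)" where
  "outer_step n R st i =
     (case st of (U, r) \<Rightarrow>
        (case inner_loop n i [1..<n+1] (U, R i, r) of (U', _, r') \<Rightarrow> (U', r')))"

definition assign_rates :: "nat \<Rightarrow> (nat \<Rightarrow> real) \<Rightarrow> (nat \<Rightarrow> real) \<Rightarrow> nat \<Rightarrow> nat \<Rightarrow> real" where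
  "assign_rates n Cu R =
     snd (foldl (outer_step n R) (\<lambda>j. Cu j - R j, \<lambda>_ _. 0) [1..<n+1])"

end

theory Submission
  imports Defs
begin

text \<open>While sub-stream \<open>i\<close> is being distributed, the quantity \<open>\<Sum>\<^sub>j U\<^sub>j - (n - 2) R'\<^sub>i\<close>
  is invariant, and the inner loop can end with \<open>R'\<^sub>i > 0\<close> only after every residual
  capacity \<open>U\<^sub>j\<close> has been driven to zero. Sustainability gives the slack
  \<open>(n - 2) \<Sum>\<^sub>i R\<^sub>i \<le> \<Sum>\<^sub>j U\<^sub>j\<close> initially, and each completed sub-stream \<open>i\<close> consumes
  exactly \<open>(n - 2) R\<^sub>i\<close> of the residual capacity, so when sub-stream \<open>i\<close> is reached at least
  \<open>(n - 2) R\<^sub>i\<close> is left. Were the loop to end with \<open>R'\<^sub>i > 0\<close>, the invariant would then give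
  \<open>(n - 2) R'\<^sub>i \<le> 0\<close>.\<close>

lemma sum_fun_upd_eq:
  fixes f :: "'a \<Rightarrow> 'b :: ab_group_add"
  assumes "finite A" "j \<in> A"
  shows "(\<Sum>k\<in>A. (f(j := v)) k) = (\<Sum>k\<in>A. f k) - f j + v"
proof -
  have "(\<Sum>k\<in>A - {j}. (f(j := v)) k) = (\<Sum>k\<in>A - {j}. f k)"
    by (rule sum.cong) auto
  then show ?thesis
    by (simp add: sum.remove[OF assms] algebra_simps)
qed

definition inner_amount :: "nat \<Rightarrow> (nat \<Rightarrow> real) \<Rightarrow> real \<Rightarrow> nat \<Rightarrow> real" where
  "inner_amount n U Rp j = (if (real n - 2) * Rp > U j then U j / (real n - 2) else Rp)"

lemma inner_step_eq:
  "inner_step n i (U, Rp, r) j =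
     (U(j := U j - (real n - 2) * inner_amount n U Rp j), Rp - inner_amount n U Rp j,
      r(i := (r i)(j := inner_amount n U Rp j)))"
  unfolding inner_step_def inner_amount_def Let_def by simp

lemma inner_amount_bounds:
  assumes "0 \<le> U j" "0 \<le> Rp"
  shows "0 \<le> inner_amount n U Rp j" "inner_amount n U Rp j \<le> Rp"
    "(real n - 2) * inner_amount n U Rp j \<le> U j"
proof -
  have "0 < real n - 2" if "(real n - 2) * Rp > U j"
    using that assms by (smt (verit) mult_nonpos_nonneg)
  then show "0 \<le> inner_amount n U Rp j" "inner_amount n U Rp j \<le> Rp"
    "(real n - 2) * inner_amount n U Rp j \<le> U j"
    using assms by (auto simp: inner_amount_def field_simps)
qed

lemma inner_amount_saturates:
  assumes "0 \<le> U j" "0 \<le> Rp" "inner_amount n U Rp j \<noteq> Rp"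
  shows "0 < real n - 2" "(real n - 2) * inner_amount n U Rp j = U j"
proof -
  have less: "(real n - 2) * Rp > U j"
    using assms(3) by (auto simp: inner_amount_def split: if_splits)
  then show pos: "0 < real n - 2"
    using assms(1,2) by (smt (verit) mult_nonpos_nonneg)
  show "(real n - 2) * inner_amount n U Rp j = U j"
    using less pos by (simp add: inner_amount_def)
qed

lemma inner_loop_Cons_cases:
  fixes n j :: nat and U :: "nat \<Rightarrow> real" and Rp x :: real
  defines "x \<equiv> inner_amount n U Rp j"
  assumes "inner_loop n i (j # js) (U, Rp, r) = s'"
  obtains (finished) "x = Rp"
      "s' = (U(j := U j - (real n - 2) * Rp), 0, r(i := (r i)(j := Rp)))"
    | (continues) "x \<noteq> Rp"
      "inner_loop n i js (U(j := U j - (real n - 2) * x), Rp - x, r(i := (r i)(j := x))) = s'"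
  using assms by (auto simp: inner_step_eq Let_def split: if_splits)

lemma inner_loop_other_rows:
  assumes "inner_loop n i js (U, Rp, r) = (U', Rp', r')" "k \<noteq> i"
  shows "r' k = r k"
  using assms(1)
proof (induction js arbitrary: U Rp r)
  case (Cons j js)
  from Cons.prems show ?case
    by (cases rule: inner_loop_Cons_cases) (use assms(2) in \<open>auto dest: Cons.IH\<close>)
qed simp

lemma inner_loop_unvisited:
  assumes "inner_loop n i js (U, Rp, r) = (U', Rp', r')" "j \<notin> set js"
  shows "U' j = U j"
  using assms
proof (induction js arbitrary: U Rp r)
  case (Cons k js)
  from Cons.prems(1) show ?case
    by (cases rule: inner_loop_Cons_cases) (use Cons.prems(2) in \<open>auto dest: Cons.IH\<close>)
qed simp

lemma inner_loop_nonneg: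
  assumes "inner_loop n i js (U, Rp, r) = (U', Rp', r')"
    and "0 \<le> Rp" "\<forall>j\<in>A. 0 \<le> U j" "set js \<subseteq> A"
  shows "0 \<le> Rp' \<and> (\<forall>j\<in>A. 0 \<le> U' j)"
  using assms
proof (induction js arbitrary: U Rp r)
  case (Cons j js)
  let ?x = "inner_amount n U Rp j"
  have "?x \<le> Rp" "(real n - 2) * ?x \<le> U j"
    using inner_amount_bounds Cons.prems by auto
  then have "0 \<le> Rp - ?x" "\<forall>k\<in>A. 0 \<le> (U(j := U j - (real n - 2) * ?x)) k"
    using Cons.prems by auto
  with Cons.prems show ?case
    by (cases rule: inner_loop_Cons_cases) (auto dest: Cons.IH)
qed simp

lemma inner_loop_capacity_invariant:
  assumes "inner_loop n i js (U, Rp, r) = (U', Rp', r')" "finite A" "set js \<subseteq> A"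
  shows "(\<Sum>j\<in>A. U' j) - (real n - 2) * Rp' = (\<Sum>j\<in>A. U j) - (real n - 2) * Rp"
  using assms(1,3)
proof (induction js arbitrary: U Rp r)
  case (Cons j js)
  let ?x = "inner_amount n U Rp j"
  have "j \<in> A"
    using Cons.prems(2) by simp
  then have "(\<Sum>k\<in>A. (U(j := U j - (real n - 2) * ?x)) k) - (real n - 2) * (Rp - ?x)
      = (\<Sum>k\<in>A. U k) - (real n - 2) * Rp"
    by (simp only: sum_fun_upd_eq[OF assms(2)]) (simp add: algebra_simps)
  with Cons.prems show ?case
    by (cases rule: inner_loop_Cons_cases) (auto dest: Cons.IH)
qed simp

lemma inner_loop_rate_invariant:
  assumes "inner_loop n i js (U, Rp, r) = (U', Rp', r')" "finite A" "set js \<subseteq> A"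
    and "distinct js" "\<forall>j\<in>set js. r i j = 0"
  shows "(\<Sum>j\<in>A. r' i j) + Rp' = (\<Sum>j\<in>A. r i j) + Rp"
  using assms(1,3-)
proof (induction js arbitrary: U Rp r)
  case (Cons j js)
  let ?x = "inner_amount n U Rp j"
  have "j \<in> A"
    using Cons.prems(2) by simp
  then have "(\<Sum>k\<in>A. ((r i)(j := ?x)) k) + (Rp - ?x) = (\<Sum>k\<in>A. r i k) + Rp"
    using Cons.prems(4) by (simp only: sum_fun_upd_eq[OF assms(2)]) simp
  with Cons.prems show ?case
    by (cases rule: inner_loop_Cons_cases) (auto dest: Cons.IH)
qed simp

lemma inner_loop_saturates:
  assumes "inner_loop n i js (U, Rp, r) = (U', Rp', r')"
    and "distinct js" "0 \<le> Rp" "\<forall>j\<in>set js. 0 \<le> U j" "js \<noteq> []" "Rp' \<noteq> 0"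
  shows "0 < real n - 2 \<and> (\<forall>j\<in>set js. U' j = 0)"
  using assms
proof (induction js arbitrary: U Rp r)
  case (Cons j js)
  let ?x = "inner_amount n U Rp j"
  from Cons.prems(1) show ?case
  proof (cases rule: inner_loop_Cons_cases)
    case finished
    with Cons.prems(6) show ?thesis by simp
  next
    case continues
    then have pos: "0 < real n - 2" and saturated: "(real n - 2) * ?x = U j"
      using inner_amount_saturates Cons.prems(3,4) by auto
    have "U' j = 0"
      using inner_loop_unvisited[OF continues(2)] Cons.prems(2) saturated by simp
    moreover have "\<forall>k\<in>set js. U' k = 0" if "js \<noteq> []"
      using Cons.IH[OF continues(2)] inner_amount_bounds(2)[of U j Rp n] Cons.prems that
      by auto
    ultimately have "\<forall>k\<in>set (j # js). U' k = 0"
      by (cases "js = []") auto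
    with pos show ?thesis
      by blast
  qed
qed simp

lemma outer_step_assigns_row:
  assumes "outer_step n R (U, r) i = (U', r')"
    and "i \<in> {1..n}" "0 \<le> R i" "\<forall>j\<in>{1..n}. 0 \<le> U j" "\<forall>j\<in>{1..n}. r i j = 0"
    and slack: "(real n - 2) * R i \<le> (\<Sum>j=1..n. U j)"
  shows "\<forall>j\<in>{1..n}. 0 \<le> U' j"
    and "(\<Sum>j=1..n. U' j) = (\<Sum>j=1..n. U j) - (real n - 2) * R i"
    and "(\<Sum>j=1..n. r' i j) = R i"
    and "\<forall>k. k \<noteq> i \<longrightarrow> r' k = r k"
proof -
  define js where "js = [1..<n+1]"
  obtain Rp' where loop: "inner_loop n i js (U, R i, r) = (U', Rp', r')"
    using assms(1) unfolding outer_step_def js_def by (auto split: prod.splits)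
  have js: "set js = {1..n}" "distinct js" "js \<noteq> []"
    using assms(2) by (auto simp: js_def)
  have nonneg: "0 \<le> Rp'" "\<forall>j\<in>{1..n}. 0 \<le> U' j"
    using inner_loop_nonneg[OF loop, of "{1..n}"] assms(3,4) js by auto
  have capacity: "(\<Sum>j=1..n. U' j) - (real n - 2) * Rp' = (\<Sum>j=1..n. U j) - (real n - 2) * R i"
    using inner_loop_capacity_invariant[OF loop] js by simp
  have Rp'_zero: "Rp' = 0"
  proof (rule ccontr)
    assume "Rp' \<noteq> 0"
    then have "0 < real n - 2" "\<forall>j\<in>{1..n}. U' j = 0"
      using inner_loop_saturates[OF loop] assms(3,4) js by auto
    then have "(real n - 2) * Rp' \<le> 0"
      using capacity slack by simp
    with \<open>0 < real n - 2\<close> \<open>Rp' \<noteq> 0\<close> nonneg(1) show False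
      by (simp add: mult_le_0_iff)
  qed
  show "\<forall>j\<in>{1..n}. 0 \<le> U' j"
    by (fact nonneg(2))
  show "(\<Sum>j=1..n. U' j) = (\<Sum>j=1..n. U j) - (real n - 2) * R i"
    using capacity Rp'_zero by simp
  show "(\<Sum>j=1..n. r' i j) = R i"
    using inner_loop_rate_invariant[OF loop] assms(5) js Rp'_zero by simp
  show "\<forall>k. k \<noteq> i \<longrightarrow> r' k = r k"
    using inner_loop_other_rows[OF loop] by blast
qed

lemma outer_loop_prefix:
  assumes "\<forall>i\<in>{1..n}. 0 \<le> R i" "\<forall>j\<in>{1..n}. 0 \<le> U\<^sub>0 j"
    and "(real n - 2) * (\<Sum>i=1..n. R i) \<le> (\<Sum>j=1..n. U\<^sub>0 j)"
    and "k \<le> n" "foldl (outer_step n R) (U\<^sub>0, \<lambda>_ _. 0) [1..<k+1] = (U, r)"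
  shows "(\<forall>j\<in>{1..n}. 0 \<le> U j) \<and> (real n - 2) * (\<Sum>i\<in>{k<..n}. R i) \<le> (\<Sum>j=1..n. U j)
    \<and> (\<forall>i\<in>{1..k}. (\<Sum>j=1..n. r i j) = R i) \<and> (\<forall>i>k. \<forall>j. r i j = 0)"
  using assms(4,5)
proof (induction k arbitrary: U r)
  case 0
  have "{0<..n} = {1..n}" by auto
  with 0 assms(2,3) show ?case by auto
next
  case (Suc k)
  obtain U\<^sub>k r\<^sub>k where prefix: "foldl (outer_step n R) (U\<^sub>0, \<lambda>_ _. 0) [1..<k+1] = (U\<^sub>k, r\<^sub>k)"
    by fastforce
  note IH = Suc.IH[OF Suc_leD[OF Suc.prems(1)] prefix]
  have step: "outer_step n R (U\<^sub>k, r\<^sub>k) (Suc k) = (U, r)"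
    using Suc.prems(2) prefix by simp
  have split_tail: "(\<Sum>i\<in>{k<..n}. R i) = R (Suc k) + (\<Sum>i\<in>{Suc k<..n}. R i)"
    using Suc.prems(1) by (simp add: atLeastSucAtMost_greaterThanAtMost[symmetric] sum.head)
  have tail_nonneg: "0 \<le> (\<Sum>i\<in>{Suc k<..n}. R i)"
    using assms(1) by (intro sum_nonneg) auto
  have slack: "(real n - 2) * R (Suc k) \<le> (\<Sum>j=1..n. U\<^sub>k j)"
  proof (cases "0 \<le> real n - 2")
    case True
    then have "0 \<le> (real n - 2) * (\<Sum>i\<in>{Suc k<..n}. R i)"
      using tail_nonneg by simp
    then show ?thesis
      using IH Suc.prems(1) split_tail by (simp add: distrib_left)
  next
    case False
    then have "(real n - 2) * R (Suc k) \<le> 0"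
      using assms(1) Suc.prems(1) by (simp add: mult_nonpos_nonneg)
    moreover have "0 \<le> (\<Sum>j=1..n. U\<^sub>k j)"
      using IH Suc.prems(1) by (auto intro: sum_nonneg)
    ultimately show ?thesis
      by linarith
  qed
  have "Suc k \<in> {1..n}" "0 \<le> R (Suc k)" "\<forall>j\<in>{1..n}. 0 \<le> U\<^sub>k j"
    "\<forall>j\<in>{1..n}. r\<^sub>k (Suc k) j = 0"
    using IH Suc.prems(1) assms(1) by auto
  note row = outer_step_assigns_row[OF step this slack]
  show ?case
  proof (intro conjI)
    show "\<forall>j\<in>{1..n}. 0 \<le> U j"
      by (fact row(1))
    show "(real n - 2) * (\<Sum>i\<in>{Suc k<..n}. R i) \<le> (\<Sum>j=1..n. U j)"
      using row(2) IH split_tail by (simp add: algebra_simps)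
    show "\<forall>i\<in>{1..Suc k}. (\<Sum>j=1..n. r i j) = R i"
      using row(3,4) IH by (auto simp: le_Suc_eq)
    show "\<forall>i>Suc k. \<forall>j. r i j = 0"
      using row(4) IH by simp
  qed
qed

theorem propositionB3:
  fixes n :: nat and Cu Cd R :: "nat \<Rightarrow> real"
  assumes "n \<ge> 1"
    and "\<forall>i\<in>{1..n}. Cu i > 0 \<and> Cd i > 0 \<and> R i > 0"
    and "\<forall>i\<in>{1..n}. R i \<le> Cu i"
    and "\<forall>i\<in>{1..n}. (\<Sum>j\<in>{1..n} - {i}. R j) \<le> Cd i"
    and "(real n - 1) * (\<Sum>i=1..n. R i) \<le> (\<Sum>i=1..n. Cu i)"
  shows "\<forall>i\<in>{1..n}. (\<Sum>j=1..n. assign_rates n Cu R i j) = R i"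
proof -
  obtain U r where run: "foldl (outer_step n R) (\<lambda>j. Cu j - R j, \<lambda>_ _. 0) [1..<n+1] = (U, r)"
    by fastforce
  have "\<forall>i\<in>{1..n}. 0 \<le> R i" "\<forall>j\<in>{1..n}. 0 \<le> Cu j - R j"
    using assms(2,3) by (auto simp: less_imp_le)
  moreover have "(real n - 2) * (\<Sum>i=1..n. R i) \<le> (\<Sum>j=1..n. Cu j - R j)"
    using assms(5) by (simp add: sum_subtractf algebra_simps)
  ultimately have "\<forall>i\<in>{1..n}. (\<Sum>j=1..n. r i j) = R i"
    using outer_loop_prefix[OF _ _ _ order_refl run] by blast
  moreover have "assign_rates n Cu R = r"
    unfolding assign_rates_def run by simp
  ultimately show ?thesis by simp
qed

end
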